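(* Let $\mathfrak p\in\mathbb R[x,y,z]$ be a polynomial of total degree at most $3$ and let $\mathcal V(\nabla\mathfrak p)=\{u\in\mathbb R^3:\nabla\mathfrak p(u)=0\}$. Let $m\in\mathcal V(\nabla\mathfrak p)$ be a local extremum of $\mathfrak p$ and let $\mathcal C\subset\mathcal V(\nabla\mathfrak p)$ be a path-connected component containing $m$. Then $\mathrm{aff}(\mathcal C)\subset\mathcal V(\nabla\mathfrak p)$.
   Context: $\mathrm{aff}$ denotes affine hull. *)

theory Defs
  imports "HOL-Analysis.Analysis"
begin

definition is_poly3_deg_le3 :: "(real^3 \<Rightarrow> real) \<Rightarrow> bool" where
  "is_poly3_deg_le3 p \<longleftrightarrow>
     (\<exists>c :: nat \<Rightarrow> nat \<Rightarrow> nat \<Rightarrow> real. \<forall>u.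
        p u = (\<Sum>(i,j,k)\<in>{(i,j,k). i + j + k \<le> 3}.
                 c i j k * (u$1)^i * (u$2)^j * (u$3)^k))"

definition grad_zero_set :: "(real^3 \<Rightarrow> real) \<Rightarrow> (real^3) set" where
  "grad_zero_set p = {u. (p has_derivative (\<lambda>h. 0)) (at u)}"

definition local_extremum :: "(real^3 \<Rightarrow> real) \<Rightarrow> real^3 \<Rightarrow> bool" where
  "local_extremum p m \<longleftrightarrow>
     (\<exists>e>0. (\<forall>v\<in>ball m e. p v \<le> p m) \<or> (\<forall>v\<in>ball m e. p m \<le> p v))"

end

theory Submission
  imports Defs
begin

(* Write p(m + u) = p(m) + A(u,u) + T(u,u,u), where A is half the Hessian of p at m and T the
   cubic part; replacing p by -p we may assume that p has a local minimum at m. Restricting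
   p to lines through m shows that A is positive semidefinite and that for every null vector n
   of A also T(n,n,-) vanishes, so m + ker A consists of critical points. Conversely, split a
   critical point m + u as u = n + w with n in ker A and w orthogonal to ker A: the critical
   equations give 2 A(w,w) + 3 T(w,w,w) = 0, and comparing A(w,w) >= c |w|^2 with
   |T(w,w,w)| <= K |w|^3 shows that A(u,u) is either 0 or at least some fixed delta > 0.
   Since A(x - m, x - m) is continuous, it vanishes on the whole connected component C, so C
   lies in the affine space m + ker A of critical points. *)

section \<open>Bilinear and trilinear forms in coordinates\<close>

definition bilin_form :: "('n::finite \<Rightarrow> 'n \<Rightarrow> real) \<Rightarrow> real^'n \<Rightarrow> real^'n \<Rightarrow> real" where
  "bilin_form a x y = (\<Sum>i\<in>UNIV. \<Sum>j\<in>UNIV. a i j * x$i * y$j)"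

definition trilin_form ::
    "('n::finite \<Rightarrow> 'n \<Rightarrow> 'n \<Rightarrow> real) \<Rightarrow> real^'n \<Rightarrow> real^'n \<Rightarrow> real^'n \<Rightarrow> real" where
  "trilin_form b x y z = (\<Sum>i\<in>UNIV. \<Sum>j\<in>UNIV. \<Sum>k\<in>UNIV. b i j k * x$i * y$j * z$k)"

definition sym_bilin :: "('n \<Rightarrow> 'n \<Rightarrow> real) \<Rightarrow> bool" where
  "sym_bilin a \<longleftrightarrow> (\<forall>i j. a i j = a j i)"

definition sym_trilin :: "('n \<Rightarrow> 'n \<Rightarrow> 'n \<Rightarrow> real) \<Rightarrow> bool" where
  "sym_trilin b \<longleftrightarrow> (\<forall>i j k. b i j k = b j i k \<and> b i j k = b i k j)"

definition bilin_kernel :: "('n::finite \<Rightarrow> 'n \<Rightarrow> real) \<Rightarrow> (real^'n) set" where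
  "bilin_kernel a = {n. \<forall>w. bilin_form a n w = 0}"

lemma bilin_form_add_left: "bilin_form a (x + y) z = bilin_form a x z + bilin_form a y z"
  and bilin_form_add_right: "bilin_form a z (x + y) = bilin_form a z x + bilin_form a z y"
  by (simp_all add: bilin_form_def algebra_simps sum.distrib)

lemma bilin_form_scaleR_left: "bilin_form a (t *\<^sub>R x) y = t * bilin_form a x y"
  and bilin_form_scaleR_right: "bilin_form a x (t *\<^sub>R y) = t * bilin_form a x y"
  by (simp_all add: bilin_form_def algebra_simps sum_distrib_left)

lemma trilin_form_add:
  "trilin_form b (x + x') y z = trilin_form b x y z + trilin_form b x' y z"
  "trilin_form b x (y + y') z = trilin_form b x y z + trilin_form b x y' z"
  "trilin_form b x y (z + z') = trilin_form b x y z + trilin_form b x y z'"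
  by (simp_all add: trilin_form_def algebra_simps sum.distrib)

lemma trilin_form_scaleR:
  "trilin_form b (t *\<^sub>R x) y z = t * trilin_form b x y z"
  "trilin_form b x (t *\<^sub>R y) z = t * trilin_form b x y z"
  "trilin_form b x y (t *\<^sub>R z) = t * trilin_form b x y z"
  by (simp_all add: trilin_form_def algebra_simps sum_distrib_left)

lemma bilin_form_zero [simp]:
  "bilin_form a 0 y = 0" "bilin_form a x 0 = 0" "bilin_form (\<lambda>_ _. 0) x y = 0"
  by (simp_all add: bilin_form_def)

lemma trilin_form_zero [simp]: "trilin_form (\<lambda>_ _ _. 0) x y z = 0"
  by (simp add: trilin_form_def)

lemma bilin_form_uminus: "bilin_form (- a) x y = - bilin_form a x y"
  by (simp add: bilin_form_def sum_negf)

lemma trilin_form_uminus: "trilin_form (- b) x y z = - trilin_form b x y z"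
  by (simp add: trilin_form_def sum_negf)

lemma bilin_form_coeff_add: "bilin_form (\<lambda>i j. a i j + a' i j) x y = bilin_form a x y + bilin_form a' x y"
  by (simp add: bilin_form_def algebra_simps sum.distrib)

lemma trilin_form_coeff_add:
  "trilin_form (\<lambda>i j k. b i j k + b' i j k) x y z = trilin_form b x y z + trilin_form b' x y z"
  by (simp add: trilin_form_def algebra_simps sum.distrib)

lemma bilin_form_coeff_divide: "bilin_form (\<lambda>i j. a i j / t) x y = bilin_form a x y / t"
  by (simp add: bilin_form_def sum_divide_distrib)

lemma trilin_form_coeff_divide: "trilin_form (\<lambda>i j k. b i j k / t) x y z = trilin_form b x y z / t"
  by (simp add: trilin_form_def sum_divide_distrib)

lemma bilin_form_swap_coeffs: "bilin_form (\<lambda>i j. a j i) x y = bilin_form a y x"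
  unfolding bilin_form_def by (subst sum.swap) (simp add: mult_ac)

lemma trilin_form_swap_coeffs:
  "trilin_form (\<lambda>i j k. b j i k) x y z = trilin_form b y x z"
  "trilin_form (\<lambda>i j k. b i k j) x y z = trilin_form b x z y"
  unfolding trilin_form_def
   apply (rule trans[OF sum.swap], simp add: mult_ac)
  apply (rule sum.cong[OF refl], rule trans[OF sum.swap], simp add: mult_ac)
  done

lemma bilin_form_commute:
  assumes "sym_bilin a" shows "bilin_form a x y = bilin_form a y x"
proof -
  have "(\<lambda>i j. a j i) = a"
    using assms unfolding sym_bilin_def by auto
  then show ?thesis
    using bilin_form_swap_coeffs[of a x y] by simp
qed

lemma trilin_form_commute:
  assumes "sym_trilin b"
  shows "trilin_form b x y z = trilin_form b y x z" "trilin_form b x y z = trilin_form b x z y"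
proof -
  have "(\<lambda>i j k. b j i k) = b" "(\<lambda>i j k. b i k j) = b"
    using assms unfolding sym_trilin_def by auto
  then show "trilin_form b x y z = trilin_form b y x z" "trilin_form b x y z = trilin_form b x z y"
    using trilin_form_swap_coeffs[of b] by simp_all
qed

lemma subspace_bilin_kernel: "subspace (bilin_kernel a)"
  by (auto simp: subspace_def bilin_kernel_def bilin_form_add_left bilin_form_scaleR_left)

section \<open>Polynomials of degree at most three\<close>

definition cubic_poly ::
    "real \<Rightarrow> real^'n \<Rightarrow> ('n::finite \<Rightarrow> 'n \<Rightarrow> real) \<Rightarrow> ('n \<Rightarrow> 'n \<Rightarrow> 'n \<Rightarrow> real) \<Rightarrow> real^'n \<Rightarrow> real"
  where "cubic_poly c g a b x = c + g \<bullet> x + bilin_form a x x + trilin_form b x x x"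

definition cubic_poly_deg_le :: "nat \<Rightarrow> (real^'n::finite \<Rightarrow> real) \<Rightarrow> bool" where
  "cubic_poly_deg_le d q \<longleftrightarrow> (\<exists>c g a b. (d = 0 \<longrightarrow> g = 0) \<and> (d \<le> 1 \<longrightarrow> a = (\<lambda>_ _. 0))
     \<and> (d \<le> 2 \<longrightarrow> b = (\<lambda>_ _ _. 0)) \<and> q = cubic_poly c g a b)"

lemma cubic_poly_deg_le_const: "cubic_poly_deg_le 0 (\<lambda>x. c)"
  unfolding cubic_poly_deg_le_def cubic_poly_def
  by (intro exI[of _ c] exI[of _ 0] exI[of _ "\<lambda>_ _. 0"] exI[of _ "\<lambda>_ _ _. 0"]) simp

lemma cubic_poly_deg_le_mult_coord:
  assumes "cubic_poly_deg_le d q" "d \<le> 2"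
  shows "cubic_poly_deg_le (Suc d) (\<lambda>x. q x * x$l)"
proof -
  obtain c g a b where deg: "d = 0 \<longrightarrow> g = 0" "d \<le> 1 \<longrightarrow> a = (\<lambda>_ _. 0)" "b = (\<lambda>_ _ _. 0)"
      and q: "q = cubic_poly c g a b"
    using assms unfolding cubic_poly_deg_le_def by blast
  have if_times: "(if P then u else 0) * v = (if P then u * v else (0::real))" for P u v
    by simp
  have lin: "(c *\<^sub>R axis l 1) \<bullet> x = c * x$l" for x
    by (simp add: inner_axis')
  have bilin: "bilin_form (\<lambda>i j. if j = l then g$i else 0) x x = (g \<bullet> x) * x$l"
    and trilin: "trilin_form (\<lambda>i j k. if k = l then a i j else 0) x x x = bilin_form a x x * x$l"
    for x by (simp_all add: bilin_form_def trilin_form_def inner_vec_def sum_distrib_right if_times)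
  have "q x * x$l = cubic_poly 0 (c *\<^sub>R axis l 1) (\<lambda>i j. if j = l then g$i else 0)
                      (\<lambda>i j k. if k = l then a i j else 0) x" for x
    unfolding q cubic_poly_def lin bilin trilin deg(3) by (simp add: algebra_simps)
  then have "(\<lambda>x. q x * x$l) = cubic_poly 0 (c *\<^sub>R axis l 1) (\<lambda>i j. if j = l then g$i else 0)
                      (\<lambda>i j k. if k = l then a i j else 0)"
    by (rule ext)
  moreover have "Suc d \<le> 1 \<Longrightarrow> (\<lambda>i j. if j = l then g$i else 0) = (\<lambda>_ _. 0)"
    and "Suc d \<le> 2 \<Longrightarrow> (\<lambda>i j k. if k = l then a i j else 0) = (\<lambda>_ _ _. 0)"
    using deg by (auto simp: fun_eq_iff)
  ultimately show ?thesis
    unfolding cubic_poly_deg_le_def using assms(2) by blast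
qed

lemma cubic_poly_deg_le_mult_coord_power:
  assumes "cubic_poly_deg_le d q" "d + n \<le> 3"
  shows "cubic_poly_deg_le (d + n) (\<lambda>x. q x * (x$l)^n)"
  using assms(2)
proof (induction n)
  case 0
  then show ?case using assms(1) by simp
next
  case (Suc n)
  then have "cubic_poly_deg_le (d + n) (\<lambda>x. q x * (x$l)^n)" by simp
  from cubic_poly_deg_le_mult_coord[OF this, of l] Suc.prems show ?case
    by (simp add: algebra_simps)
qed

lemma cubic_poly_deg_le_3_iff: "cubic_poly_deg_le 3 q \<longleftrightarrow> (\<exists>c g a b. q = cubic_poly c g a b)"
  by (simp add: cubic_poly_deg_le_def)

lemma cubic_poly_deg_le_3I: "cubic_poly_deg_le 3 (cubic_poly c g a b)"
  unfolding cubic_poly_deg_le_3_iff by auto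

lemma cubic_poly_deg_le_3_mono: "cubic_poly_deg_le d q \<Longrightarrow> cubic_poly_deg_le 3 q"
  unfolding cubic_poly_deg_le_def by auto

lemma cubic_poly_add:
  "cubic_poly c g a b x + cubic_poly c' g' a' b' x =
     cubic_poly (c + c') (g + g') (\<lambda>i j. a i j + a' i j) (\<lambda>i j k. b i j k + b' i j k) x"
  unfolding cubic_poly_def bilin_form_coeff_add trilin_form_coeff_add inner_add_left by simp

lemma cubic_poly_scale:
  "t * cubic_poly c g a b x = cubic_poly (t * c) (t *\<^sub>R g) (\<lambda>i j. t * a i j) (\<lambda>i j k. t * b i j k) x"
  by (simp add: cubic_poly_def bilin_form_def trilin_form_def algebra_simps sum_distrib_left)

lemma cubic_poly_deg_le_3_sum:
  "finite I \<Longrightarrow> (\<And>i. i \<in> I \<Longrightarrow> cubic_poly_deg_le 3 (\<lambda>x. f x i)) \<Longrightarrow>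
     cubic_poly_deg_le 3 (\<lambda>x. \<Sum>i\<in>I. f x i)"
proof (induction I rule: finite_induct)
  case empty
  show ?case using cubic_poly_deg_le_3_mono[OF cubic_poly_deg_le_const[of 0]] by simp
next
  case (insert i I)
  obtain c g a b where fi: "(\<lambda>x. f x i) = cubic_poly c g a b"
    using insert.prems unfolding cubic_poly_deg_le_3_iff by (meson insertI1)
  obtain c' g' a' b' where fI: "(\<lambda>x. \<Sum>i\<in>I. f x i) = cubic_poly c' g' a' b'"
    using insert.IH insert.prems unfolding cubic_poly_deg_le_3_iff by (meson insertI2)
  have "f x i + (\<Sum>i\<in>I. f x i) = cubic_poly (c + c') (g + g')
      (\<lambda>i j. a i j + a' i j) (\<lambda>i j k. b i j k + b' i j k) x" for x
    using fun_cong[OF fi, of x] fun_cong[OF fI, of x] by (simp add: cubic_poly_add)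
  then have "(\<lambda>x. \<Sum>i\<in>insert i I. f x i) = cubic_poly (c + c') (g + g')
      (\<lambda>i j. a i j + a' i j) (\<lambda>i j k. b i j k + b' i j k)"
    using insert(1,2) by (simp add: fun_eq_iff)
  then show ?case
    by (simp add: cubic_poly_deg_le_3I)
qed

lemma cubic_poly_deg_le_3_scale:
  assumes "cubic_poly_deg_le 3 q" shows "cubic_poly_deg_le 3 (\<lambda>x. t * q x)"
proof -
  obtain c g a b where "q = cubic_poly c g a b"
    using assms by (auto simp: cubic_poly_deg_le_3_iff)
  then have "(\<lambda>x. t * q x) =
      cubic_poly (t * c) (t *\<^sub>R g) (\<lambda>i j. t * a i j) (\<lambda>i j k. t * b i j k)"
    by (simp add: fun_eq_iff cubic_poly_scale)
  then show ?thesis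
    by (simp add: cubic_poly_deg_le_3I)
qed

lemma cubic_poly_deg_le_monomial:
  assumes "i + j + k \<le> 3"
  shows "cubic_poly_deg_le 3 (\<lambda>x::real^3. (x$1)^i * (x$2)^j * (x$3)^k)"
proof -
  have "cubic_poly_deg_le (0 + i + j + k) (\<lambda>x::real^3. 1 * (x$1)^i * (x$2)^j * (x$3)^k)"
    using assms
    by (intro cubic_poly_deg_le_mult_coord_power cubic_poly_deg_le_const) simp_all
  then show ?thesis
    using cubic_poly_deg_le_3_mono by simp
qed

lemma is_poly3_deg_le3_imp_cubic_poly_deg_le: "is_poly3_deg_le3 p \<Longrightarrow> cubic_poly_deg_le 3 p"
proof -
  assume "is_poly3_deg_le3 p"
  then obtain c :: "nat \<Rightarrow> nat \<Rightarrow> nat \<Rightarrow> real" where p: "p = (\<lambda>u.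
      \<Sum>(i,j,k)\<in>{(i,j,k). i + j + k \<le> 3}. c i j k * (u$1)^i * (u$2)^j * (u$3)^k)"
    unfolding is_poly3_deg_le3_def by auto
  have monomial: "cubic_poly_deg_le 3 (\<lambda>u::real^3. c i j k * (u$1)^i * (u$2)^j * (u$3)^k)"
    if "i + j + k \<le> 3" for i j k
    using cubic_poly_deg_le_3_scale[OF cubic_poly_deg_le_monomial[OF that]] by (simp add: mult.assoc)
  have "finite {(i,j,k). i + j + k \<le> (3::nat)}"
    by (rule finite_subset[of _ "{..3} \<times> {..3} \<times> {..3}"]) auto
  then show ?thesis
    unfolding p by (rule cubic_poly_deg_le_3_sum) (clarsimp simp: monomial)
qed

lemma cubic_poly_symmetrize:
  obtains a' b' where "sym_bilin a'" "sym_trilin b'" "cubic_poly c g a b = cubic_poly c g a' b'"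
proof -
  define a' where "a' = (\<lambda>i j. (a i j + a j i) / 2)"
  define b' where "b' = (\<lambda>i j k. (b i j k + b j i k + b i k j + b k j i + b j k i + b k i j) / 6)"
  have "sym_bilin a'" "sym_trilin b'"
    unfolding a'_def b'_def sym_bilin_def sym_trilin_def by (simp_all add: add_ac)
  moreover have "bilin_form a' x x = bilin_form a x x" for x
    unfolding a'_def bilin_form_coeff_divide bilin_form_coeff_add bilin_form_swap_coeffs[of a]
    by simp
  moreover have "trilin_form b' x x x = trilin_form b x x x" for x
    unfolding b'_def trilin_form_coeff_divide trilin_form_coeff_add
      trilin_form_swap_coeffs(1)[of b] trilin_form_swap_coeffs(2)[of b]
      trilin_form_swap_coeffs(2)[of "\<lambda>i j k. b j i k"] trilin_form_swap_coeffs(1)[of "\<lambda>i j k. b k i j"]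
      trilin_form_swap_coeffs(1)[of "\<lambda>i j k. b i k j"]
    by simp
  ultimately show ?thesis
    using that[of a' b'] by (simp add: fun_eq_iff cubic_poly_def)
qed

lemma is_poly3_deg_le3_symmetric_cubic_poly:
  assumes "is_poly3_deg_le3 p"
  obtains c g a b where "sym_bilin a" "sym_trilin b" "p = cubic_poly c g a b"
proof -
  obtain c g a b where p: "p = cubic_poly c g a b"
    using is_poly3_deg_le3_imp_cubic_poly_deg_le[OF assms] by (auto simp: cubic_poly_deg_le_3_iff)
  obtain a' b' where "sym_bilin a'" "sym_trilin b'" "cubic_poly c g a b = cubic_poly c g a' b'"
    by (rule cubic_poly_symmetrize)
  with that[of a' b' c g] show ?thesis
    by (simp add: p)
qed

section \<open>Derivatives and recentring at a critical point\<close>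

lemma has_derivative_bilin_form_diag:
  "((\<lambda>x. bilin_form a x x) has_derivative (\<lambda>h. bilin_form a h x + bilin_form a x h)) (at x)"
  unfolding bilin_form_def
  by ((rule derivative_eq_intros bounded_linear_imp_has_derivative[OF bounded_linear_vec_nth]
      refl | simp)+) (simp add: algebra_simps sum.distrib)

lemma has_derivative_trilin_form_diag:
  "((\<lambda>x. trilin_form b x x x) has_derivative
     (\<lambda>h. trilin_form b h x x + trilin_form b x h x + trilin_form b x x h)) (at x)"
  unfolding trilin_form_def
  by ((rule derivative_eq_intros bounded_linear_imp_has_derivative[OF bounded_linear_vec_nth]
      refl | simp)+) (simp add: algebra_simps sum.distrib)

lemma has_derivative_cubic_poly:
  assumes "sym_bilin a" "sym_trilin b"
  shows "(cubic_poly c g a b has_derivative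
           (\<lambda>h. g \<bullet> h + 2 * bilin_form a x h + 3 * trilin_form b x x h)) (at x)"
proof -
  have "(cubic_poly c g a b has_derivative (\<lambda>h. g \<bullet> h + (bilin_form a h x + bilin_form a x h)
      + (trilin_form b h x x + trilin_form b x h x + trilin_form b x x h))) (at x)"
    unfolding cubic_poly_def [abs_def]
    by (intro derivative_eq_intros)
      (auto intro: has_derivative_bilin_form_diag has_derivative_trilin_form_diag)
  moreover have "bilin_form a h x = bilin_form a x h" "trilin_form b h x x = trilin_form b x x h"
    "trilin_form b x h x = trilin_form b x x h" for h
    using bilin_form_commute[OF assms(1)] trilin_form_commute[OF assms(2)] by metis+
  ultimately show ?thesis
    by simp
qed

definition quad_cubic :: "('n::finite \<Rightarrow> 'n \<Rightarrow> real) \<Rightarrow> ('n \<Rightarrow> 'n \<Rightarrow> 'n \<Rightarrow> real) \<Rightarrow> real^'n \<Rightarrow> real"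
  where "quad_cubic a b u = bilin_form a u u + trilin_form b u u u"

definition quad_cubic_crit ::
    "('n::finite \<Rightarrow> 'n \<Rightarrow> real) \<Rightarrow> ('n \<Rightarrow> 'n \<Rightarrow> 'n \<Rightarrow> real) \<Rightarrow> (real^'n) set"
  where "quad_cubic_crit a b = {u. \<forall>h. 2 * bilin_form a u h + 3 * trilin_form b u u h = 0}"

lemma has_derivative_quad_cubic:
  assumes "sym_bilin a" "sym_trilin b"
  shows "(quad_cubic a b has_derivative (\<lambda>h. 2 * bilin_form a x h + 3 * trilin_form b x x h)) (at x)"
proof -
  have "quad_cubic a b = cubic_poly 0 0 a b"
    by (simp add: fun_eq_iff quad_cubic_def cubic_poly_def)
  then show ?thesis
    using has_derivative_cubic_poly[OF assms, of 0 0 x] by simp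
qed

lemma quad_cubic_scaleR:
  "quad_cubic a b (t *\<^sub>R v) = bilin_form a v v * t\<^sup>2 + trilin_form b v v v * t ^ 3"
  by (simp add: quad_cubic_def bilin_form_scaleR_left bilin_form_scaleR_right trilin_form_scaleR
      power2_eq_square power3_eq_cube)

definition half_hessian ::
    "('n::finite \<Rightarrow> 'n \<Rightarrow> real) \<Rightarrow> ('n \<Rightarrow> 'n \<Rightarrow> 'n \<Rightarrow> real) \<Rightarrow> real^'n \<Rightarrow> 'n \<Rightarrow> 'n \<Rightarrow> real"
  where "half_hessian a b m = (\<lambda>i j. a i j + 3 * (\<Sum>k\<in>UNIV. b k i j * m$k))"

lemma bilin_form_half_hessian:
  "bilin_form (half_hessian a b m) x y = bilin_form a x y + 3 * trilin_form b m x y"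
proof -
  have "bilin_form (half_hessian a b m) x y
      = bilin_form a x y + 3 * (\<Sum>i\<in>UNIV. \<Sum>j\<in>UNIV. \<Sum>k\<in>UNIV. b k i j * m$k * x$i * y$j)"
    unfolding half_hessian_def bilin_form_def
    by (simp add: algebra_simps sum.distrib sum_distrib_left sum_distrib_right)
  also have "(\<Sum>i\<in>UNIV. \<Sum>j\<in>UNIV. \<Sum>k\<in>UNIV. b k i j * m$k * x$i * y$j)
      = (\<Sum>i\<in>UNIV. \<Sum>k\<in>UNIV. \<Sum>j\<in>UNIV. b k i j * m$k * x$i * y$j)"
    by (rule sum.cong[OF refl], rule sum.swap)
  also have "\<dots> = trilin_form b m x y"
    unfolding trilin_form_def by (subst sum.swap) (simp add: mult_ac)
  finally show ?thesis .
qed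

lemma sym_bilin_half_hessian:
  assumes "sym_bilin a" "sym_trilin b"
  shows "sym_bilin (half_hessian a b m)"
proof -
  have "a i j = a j i" "b k i j = b k j i" for i j k
    using assms unfolding sym_bilin_def sym_trilin_def by blast+
  then show ?thesis
    unfolding sym_bilin_def half_hessian_def by simp
qed

lemma cubic_poly_recenter:
  assumes "sym_bilin a" "sym_trilin b"
  shows "cubic_poly c g a b (m + u) = cubic_poly c g a b m
           + (g \<bullet> u + 2 * bilin_form a m u + 3 * trilin_form b m m u)
           + quad_cubic (half_hessian a b m) b u"
proof -
  have "bilin_form a u m = bilin_form a m u"
    "trilin_form b m u m = trilin_form b m m u" "trilin_form b u m m = trilin_form b m m u"
    "trilin_form b u m u = trilin_form b m u u" "trilin_form b u u m = trilin_form b m u u"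
    using bilin_form_commute[OF assms(1)] trilin_form_commute[OF assms(2)] by metis+
  then show ?thesis
    unfolding cubic_poly_def quad_cubic_def bilin_form_half_hessian inner_add_right
      bilin_form_add_left bilin_form_add_right trilin_form_add
    by (simp add: algebra_simps)
qed

lemma cubic_poly_deriv_recenter:
  assumes "sym_trilin b"
  shows "g \<bullet> h + 2 * bilin_form a (m + u) h + 3 * trilin_form b (m + u) (m + u) h
           = (g \<bullet> h + 2 * bilin_form a m h + 3 * trilin_form b m m h)
             + (2 * bilin_form (half_hessian a b m) u h + 3 * trilin_form b u u h)"
  using trilin_form_commute(1)[OF assms, of u m h]
  unfolding bilin_form_half_hessian bilin_form_add_left trilin_form_add by (simp add: algebra_simps)

lemma grad_zero_set_cubic_poly:
  assumes "sym_bilin a" "sym_trilin b"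
  shows "x \<in> grad_zero_set (cubic_poly c g a b) \<longleftrightarrow>
           (\<forall>h. g \<bullet> h + 2 * bilin_form a x h + 3 * trilin_form b x x h = 0)"
proof -
  have D: "(cubic_poly c g a b has_derivative
      (\<lambda>h. g \<bullet> h + 2 * bilin_form a x h + 3 * trilin_form b x x h)) (at x)"
    by (rule has_derivative_cubic_poly[OF assms])
  show ?thesis
  proof
    assume "x \<in> grad_zero_set (cubic_poly c g a b)"
    then have "(cubic_poly c g a b has_derivative (\<lambda>h. 0)) (at x)"
      by (simp add: grad_zero_set_def)
    from has_derivative_unique[OF D this]
    show "\<forall>h. g \<bullet> h + 2 * bilin_form a x h + 3 * trilin_form b x x h = 0"
      by (metis (mono_tags))
  next
    assume "\<forall>h. g \<bullet> h + 2 * bilin_form a x h + 3 * trilin_form b x x h = 0"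
    with D show "x \<in> grad_zero_set (cubic_poly c g a b)"
      by (simp add: grad_zero_set_def)
  qed
qed

lemma cubic_poly_at_critical_point:
  assumes "sym_bilin a" "sym_trilin b" "m \<in> grad_zero_set (cubic_poly c g a b)"
  shows "cubic_poly c g a b (m + u) = cubic_poly c g a b m + quad_cubic (half_hessian a b m) b u"
    and "m + u \<in> grad_zero_set (cubic_poly c g a b) \<longleftrightarrow> u \<in> quad_cubic_crit (half_hessian a b m) b"
proof -
  have crit_m: "g \<bullet> h + 2 * bilin_form a m h + 3 * trilin_form b m m h = 0" for h
    using assms(3) unfolding grad_zero_set_cubic_poly[OF assms(1,2)] by blast
  show "cubic_poly c g a b (m + u) = cubic_poly c g a b m + quad_cubic (half_hessian a b m) b u"
    using cubic_poly_recenter[OF assms(1,2), of c g m u] crit_m[of u] by simp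
  show "m + u \<in> grad_zero_set (cubic_poly c g a b) \<longleftrightarrow> u \<in> quad_cubic_crit (half_hessian a b m) b"
    unfolding grad_zero_set_cubic_poly[OF assms(1,2)] quad_cubic_crit_def
      cubic_poly_deriv_recenter[OF assms(2)] crit_m by simp
qed

section \<open>Critical points near a local minimum of a quadratic-plus-cubic form\<close>

lemma eventually_nhds_zero_pm:
  fixes P :: "real \<Rightarrow> bool"
  assumes "\<forall>\<^sub>F t in nhds 0. P t"
  obtains s where "s > 0" "P s" "P (- s)"
proof -
  obtain d where "d > 0" "\<And>t. dist t 0 < d \<Longrightarrow> P t"
    using assms unfolding eventually_nhds_metric by blast
  then show ?thesis
    using that[of "d / 2"] by simp
qed

lemma eventually_nhds_along_line:
  fixes v :: "'a::real_normed_vector"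
  assumes "\<forall>\<^sub>F u in nhds 0. P u"
  shows "\<forall>\<^sub>F t in nhds 0. P (t *\<^sub>R v)"
proof -
  have "((\<lambda>t. t *\<^sub>R v) \<longlongrightarrow> 0 *\<^sub>R v) (nhds 0)"
    using tendsto_scaleR[OF filterlim_ident tendsto_const] .
  then have "filterlim (\<lambda>t. t *\<^sub>R v) (nhds 0) (nhds 0)"
    by simp
  with assms show ?thesis
    by (rule eventually_compose_filterlim)
qed

lemma cubic_nonneg_near_zero:
  fixes \<alpha> \<beta> :: real
  assumes "\<forall>\<^sub>F t in nhds 0. 0 \<le> \<alpha> * t\<^sup>2 + \<beta> * t ^ 3"
  shows "0 \<le> \<alpha>" and "\<alpha> = 0 \<Longrightarrow> \<beta> = 0"
proof -
  have "\<forall>\<^sub>F t in at_right 0. 0 \<le> \<alpha> * t\<^sup>2 + \<beta> * t ^ 3"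
    using assms unfolding eventually_at_filter by (rule eventually_mono) simp
  then have "\<forall>\<^sub>F t in at_right 0. 0 \<le> \<alpha> + \<beta> * t"
    using eventually_at_right_less[of 0]
  proof eventually_elim
    case (elim t)
    then have "0 \<le> t\<^sup>2 * (\<alpha> + \<beta> * t)"
      by (simp add: power2_eq_square power3_eq_cube algebra_simps)
    with \<open>0 < t\<close> show ?case
      by (simp add: zero_le_mult_iff)
  qed
  moreover have "((\<lambda>t. \<alpha> + \<beta> * t) \<longlongrightarrow> \<alpha>) (at_right 0)"
    by (auto intro!: tendsto_eq_intros)
  ultimately show "0 \<le> \<alpha>"
    by (intro tendsto_lowerbound) auto
  obtain s where "s > 0" "0 \<le> \<alpha> * s\<^sup>2 + \<beta> * s ^ 3" "0 \<le> \<alpha> * (- s)\<^sup>2 + \<beta> * (- s) ^ 3"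
    using assms by (rule eventually_nhds_zero_pm)
  moreover assume "\<alpha> = 0"
  ultimately have "\<beta> * s ^ 3 = 0"
    by simp
  with \<open>s > 0\<close> show "\<beta> = 0"
    by simp
qed

lemma quadratic_vanishing_near_zero:
  fixes \<alpha> \<beta> :: real
  assumes "\<forall>\<^sub>F t in nhds 0. \<alpha> * t + \<beta> * t\<^sup>2 = 0"
  shows "\<alpha> = 0" "\<beta> = 0"
proof -
  obtain s where "s > 0" "\<alpha> * s + \<beta> * s\<^sup>2 = 0" "\<alpha> * (- s) + \<beta> * (- s)\<^sup>2 = 0"
    using assms by (rule eventually_nhds_zero_pm)
  then have "\<alpha> * s = 0" "\<beta> * s\<^sup>2 = 0"
    by simp_all
  with \<open>s > 0\<close> show "\<alpha> = 0" "\<beta> = 0"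
    by simp_all
qed

lemma bilin_form_add_kernel:
  assumes "sym_bilin a" "n \<in> bilin_kernel a"
  shows "bilin_form a (n + w) (n + w) = bilin_form a w w"
  using assms bilin_form_commute[OF assms(1), of w n]
  by (simp add: bilin_kernel_def bilin_form_add_left bilin_form_add_right)

lemma continuous_on_bilin_form_diag: "continuous_on S (\<lambda>x. bilin_form a x x)"
  unfolding bilin_form_def by (intro continuous_intros)

lemma trilin_form_diag_bound: "\<exists>K>0. \<forall>x. \<bar>trilin_form b x x x\<bar> \<le> K * norm x ^ 3"
proof -
  define B where "B = (\<Sum>i\<in>UNIV. \<Sum>j\<in>UNIV. \<Sum>k\<in>UNIV. \<bar>b i j k\<bar>)"
  have "B \<ge> 0"
    unfolding B_def by (intro sum_nonneg) auto
  have "\<bar>trilin_form b x x x\<bar> \<le> (B + 1) * norm x ^ 3" for x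
  proof -
    have "\<bar>trilin_form b x x x\<bar> \<le> (\<Sum>i\<in>UNIV. \<Sum>j\<in>UNIV. \<Sum>k\<in>UNIV. \<bar>b i j k * x$i * x$j * x$k\<bar>)"
      unfolding trilin_form_def
      by (rule order.trans[OF sum_abs], rule sum_mono, rule order.trans[OF sum_abs], rule sum_mono,
          rule sum_abs)
    also have "\<dots> \<le> (\<Sum>i\<in>UNIV. \<Sum>j\<in>UNIV. \<Sum>k\<in>UNIV. \<bar>b i j k\<bar> * norm x ^ 3)"
    proof (intro sum_mono)
      fix i j k
      have "\<bar>x$i\<bar> * \<bar>x$j\<bar> * \<bar>x$k\<bar> \<le> norm x * norm x * norm x"
        by (intro mult_mono component_le_norm_cart) auto
      then show "\<bar>b i j k * x$i * x$j * x$k\<bar> \<le> \<bar>b i j k\<bar> * norm x ^ 3"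
        by (simp add: abs_mult power3_eq_cube mult.assoc mult_left_mono)
    qed
    also have "\<dots> = B * norm x ^ 3"
      by (simp add: B_def sum_distrib_right)
    also have "\<dots> \<le> (B + 1) * norm x ^ 3"
      by (simp add: mult_right_mono)
    finally show ?thesis .
  qed
  with \<open>B \<ge> 0\<close> show ?thesis
    by (intro exI[of _ "B + 1"]) auto
qed

lemma bilin_form_coercive_on_kernel_orth:
  assumes psd: "\<And>v. 0 \<le> bilin_form a v v"
    and null: "\<And>v. bilin_form a v v = 0 \<Longrightarrow> v \<in> bilin_kernel a"
  shows "\<exists>c>0. \<forall>w. (\<forall>n\<in>bilin_kernel a. orthogonal w n) \<longrightarrow> c * (norm w)\<^sup>2 \<le> bilin_form a w w"
proof -
  define S where "S = sphere 0 1 \<inter> (\<Inter>n\<in>bilin_kernel a. {w. orthogonal w n})"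
  have "closed {w. orthogonal w n}" for n :: "real^'n"
    using closed_hyperplane[of n 0] by (simp add: orthogonal_def inner_commute)
  then have "compact S"
    unfolding S_def by (intro compact_Int_closed compact_sphere closed_INT) auto
  have "\<exists>c>0. \<forall>y\<in>S. c \<le> bilin_form a y y"
  proof (cases "S = {}")
    case False
    then obtain y0 where y0: "y0 \<in> S" "\<forall>y\<in>S. bilin_form a y0 y0 \<le> bilin_form a y y"
      using continuous_attains_inf[OF \<open>compact S\<close> False continuous_on_bilin_form_diag] by blast
    have "bilin_form a y0 y0 \<noteq> 0"
    proof
      assume "bilin_form a y0 y0 = 0"
      then have "orthogonal y0 y0"
        using null y0(1) unfolding S_def by blast
      then show False
        using y0(1) unfolding S_def by (simp add: orthogonal_def)
    qed
    with psd[of y0] y0(2) show ?thesis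
      by (intro exI[of _ "bilin_form a y0 y0"]) auto
  qed (auto intro: exI[of _ 1])
  then obtain c where c: "c > 0" "\<And>y. y \<in> S \<Longrightarrow> c \<le> bilin_form a y y"
    by blast
  have "c * (norm w)\<^sup>2 \<le> bilin_form a w w" if "\<forall>n\<in>bilin_kernel a. orthogonal w n" for w
  proof (cases "w = 0")
    case False
    then have "(1 / norm w) *\<^sub>R w \<in> S"
      using that unfolding S_def by (auto simp: orthogonal_def)
    moreover have "bilin_form a ((1 / norm w) *\<^sub>R w) ((1 / norm w) *\<^sub>R w) = bilin_form a w w / (norm w)\<^sup>2"
      by (simp add: bilin_form_scaleR_left bilin_form_scaleR_right power2_eq_square)
    ultimately have "c \<le> bilin_form a w w / (norm w)\<^sup>2"
      using c(2) by metis
    with False show ?thesis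
      by (simp add: pos_le_divide_eq)
  qed simp
  with c(1) show ?thesis
    by blast
qed

lemma connected_zero_or_ge_imp_zero:
  fixes f :: "'a::topological_space \<Rightarrow> real"
  assumes "connected S" "continuous_on S f" "x \<in> S" "f x = 0" "\<delta> > 0"
    and gap: "\<And>y. y \<in> S \<Longrightarrow> f y = 0 \<or> \<delta> \<le> f y"
    and "y \<in> S"
  shows "f y = 0"
proof (rule ccontr)
  assume "f y \<noteq> 0"
  with gap \<open>y \<in> S\<close> have "\<delta> \<le> f y"
    by blast
  have "connected (f ` S)"
    using assms(2,1) by (rule connected_continuous_image)
  from connectedD_interval[OF this imageI[OF \<open>x \<in> S\<close>] imageI[OF \<open>y \<in> S\<close>], of "\<delta> / 2"]
  have "\<delta> / 2 \<in> f ` S"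
    using \<open>f x = 0\<close> \<open>\<delta> > 0\<close> \<open>\<delta> \<le> f y\<close> by simp
  then obtain z where "z \<in> S" "f z = \<delta> / 2"
    by auto
  with gap[of z] \<open>\<delta> > 0\<close> show False
    by simp
qed

locale quad_cubic_local_min =
  fixes a :: "'n::finite \<Rightarrow> 'n \<Rightarrow> real" and b :: "'n \<Rightarrow> 'n \<Rightarrow> 'n \<Rightarrow> real"
  assumes sym_a: "sym_bilin a" and sym_b: "sym_trilin b"
    and local_min: "\<forall>\<^sub>F u in nhds 0. 0 \<le> quad_cubic a b u"
begin

lemma bilin_form_nonneg: "0 \<le> bilin_form a v v"
  using eventually_nhds_along_line[OF local_min, of v]
  unfolding quad_cubic_scaleR by (rule cubic_nonneg_near_zero(1))

lemma null_vector_in_kernel: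
  assumes "bilin_form a n n = 0"
  shows "n \<in> bilin_kernel a" and "trilin_form b n n h = 0"
proof -
  have cubic_zero: "trilin_form b n n n = 0"
    using eventually_nhds_along_line[OF local_min, of n] assms
    unfolding quad_cubic_scaleR by (rule cubic_nonneg_near_zero(2))
  \<comment> \<open>For small t the point t n is a local minimiser with value 0, so the derivative there vanishes.\<close>
  have "\<forall>\<^sub>F u in nhds 0. \<forall>\<^sub>F u' in nhds u. 0 \<le> quad_cubic a b u'"
    unfolding eventually_eventually by (rule local_min)
  then have "\<forall>\<^sub>F t in nhds 0. \<forall>\<^sub>F u in nhds (t *\<^sub>R n). 0 \<le> quad_cubic a b u"
    by (rule eventually_nhds_along_line)
  then have vanish: "\<forall>\<^sub>F t in nhds 0. 2 * bilin_form a n w * t + 3 * trilin_form b n n w * t\<^sup>2 = 0"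
    for w
  proof (rule eventually_mono)
    fix t :: real
    assume nonneg: "\<forall>\<^sub>F u in nhds (t *\<^sub>R n). 0 \<le> quad_cubic a b u"
    have "quad_cubic a b (t *\<^sub>R n) = 0"
      by (simp add: quad_cubic_scaleR assms cubic_zero)
    then have "\<forall>\<^sub>F u in at (t *\<^sub>R n). quad_cubic a b (t *\<^sub>R n) \<le> quad_cubic a b u"
      unfolding eventually_at_filter by (simp add: eventually_mono[OF nonneg])
    then have "(\<lambda>h. 2 * bilin_form a (t *\<^sub>R n) h + 3 * trilin_form b (t *\<^sub>R n) (t *\<^sub>R n) h) = (\<lambda>h. 0)"
      by (rule has_derivative_local_min[OF has_derivative_quad_cubic[OF sym_a sym_b]])
    from fun_cong[OF this, of w]
    show "2 * bilin_form a n w * t + 3 * trilin_form b n n w * t\<^sup>2 = 0"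
      by (simp add: bilin_form_scaleR_left trilin_form_scaleR power2_eq_square algebra_simps)
  qed
  have "bilin_form a n w = 0 \<and> trilin_form b n n w = 0" for w
    using quadratic_vanishing_near_zero[OF vanish[of w]] by simp
  then show "n \<in> bilin_kernel a" and "trilin_form b n n h = 0"
    by (simp_all add: bilin_kernel_def)
qed

lemma bilin_kernel_subset_crit: "bilin_kernel a \<subseteq> quad_cubic_crit a b"
  using null_vector_in_kernel(2) by (auto simp: bilin_kernel_def quad_cubic_crit_def)

lemma crit_mod_kernel_radial:
  assumes "n \<in> bilin_kernel a" "n + w \<in> quad_cubic_crit a b"
  shows "2 * bilin_form a w w + 3 * trilin_form b w w w = 0"
proof -
  have An: "bilin_form a n h = 0" "bilin_form a h n = 0" for h
    using assms(1) bilin_form_commute[OF sym_a, of h n] by (simp_all add: bilin_kernel_def)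
  have Tn: "trilin_form b n n h = 0" "trilin_form b n h n = 0" "trilin_form b h n n = 0" for h
    using null_vector_in_kernel(2)[of n h] An trilin_form_commute[OF sym_b] by metis+
  have crit: "2 * bilin_form a (n + w) h + 3 * trilin_form b (n + w) (n + w) h = 0" for h
    using assms(2) by (simp add: quad_cubic_crit_def)
  have "trilin_form b w w n = 0"
    using crit[of n] by (simp add: bilin_form_add_left trilin_form_add An Tn)
  then have "trilin_form b n w w = 0" "trilin_form b w n w = 0"
    using trilin_form_commute[OF sym_b] by metis+
  with crit[of w] show ?thesis
    by (simp add: bilin_form_add_left trilin_form_add An Tn)
qed

lemma crit_gap:
  "\<exists>\<delta>>0. \<forall>u\<in>quad_cubic_crit a b. bilin_form a u u = 0 \<or> \<delta> \<le> bilin_form a u u"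
proof -
  obtain c where c: "c > 0"
    "\<And>w. \<forall>n\<in>bilin_kernel a. orthogonal w n \<Longrightarrow> c * (norm w)\<^sup>2 \<le> bilin_form a w w"
    using bilin_form_coercive_on_kernel_orth[OF bilin_form_nonneg null_vector_in_kernel(1)] by blast
  obtain K where K: "K > 0" "\<And>x. \<bar>trilin_form b x x x\<bar> \<le> K * norm x ^ 3"
    using trilin_form_diag_bound by blast
  \<comment> \<open>If w \<noteq> 0: c |w|^2 \<le> A(w,w) = -3/2 T(w,w,w) \<le> 3/2 K |w|^3, hence |w| \<ge> r.\<close>
  define r where "r = 2 * c / (3 * K)"
  have "r > 0"
    using c(1) K(1) by (simp add: r_def)
  have "bilin_form a u u = 0 \<or> c * r\<^sup>2 \<le> bilin_form a u u" if "u \<in> quad_cubic_crit a b" for u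
  proof -
    obtain n w where "n \<in> span (bilin_kernel a)" "\<And>x. x \<in> span (bilin_kernel a) \<Longrightarrow> orthogonal w x"
        and u: "u = n + w"
      by (rule orthogonal_subspace_decomp_exists) blast
    moreover have "span (bilin_kernel a) = bilin_kernel a"
      by (simp add: span_eq_iff subspace_bilin_kernel)
    ultimately have n: "n \<in> bilin_kernel a" and orth: "\<forall>x\<in>bilin_kernel a. orthogonal w x"
      by simp_all
    have Au: "bilin_form a u u = bilin_form a w w"
      unfolding u by (rule bilin_form_add_kernel[OF sym_a n])
    have cw: "c * (norm w)\<^sup>2 \<le> bilin_form a w w"
      by (rule c(2)[OF orth])
    have "bilin_form a w w \<le> 3 / 2 * (K * norm w ^ 3)"
      using crit_mod_kernel_radial[OF n that[unfolded u]] K(2)[of w] by linarith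
    with cw have "c * (norm w)\<^sup>2 \<le> (3 / 2 * K * norm w) * (norm w)\<^sup>2"
      by (simp add: power2_eq_square power3_eq_cube algebra_simps)
    then have "w = 0 \<or> c \<le> 3 / 2 * K * norm w"
      using mult_right_le_imp_le[of c "(norm w)\<^sup>2" "3 / 2 * K * norm w"] by fastforce
    then have "w = 0 \<or> r \<le> norm w"
      using K(1) by (auto simp: r_def pos_divide_le_eq mult.commute)
    then show ?thesis
    proof
      assume "r \<le> norm w"
      then have "c * r\<^sup>2 \<le> c * (norm w)\<^sup>2"
        using c(1) \<open>r > 0\<close> by (simp add: power_mono)
      with cw Au show ?thesis
        by simp
    qed (simp add: Au)
  qed
  moreover have "c * r\<^sup>2 > 0"
    using c(1) \<open>r > 0\<close> by simp
  ultimately show ?thesis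
    by (intro exI[of _ "c * r\<^sup>2"]) auto
qed

lemma connected_crit_subset_kernel:
  assumes "connected S" "0 \<in> S" "S \<subseteq> quad_cubic_crit a b"
  shows "S \<subseteq> bilin_kernel a"
proof
  fix u
  assume "u \<in> S"
  obtain \<delta> where "\<delta> > 0" and gap: "\<forall>u\<in>quad_cubic_crit a b. bilin_form a u u = 0 \<or> \<delta> \<le> bilin_form a u u"
    using crit_gap by blast
  have "bilin_form a u u = 0"
    by (rule connected_zero_or_ge_imp_zero[OF assms(1) continuous_on_bilin_form_diag assms(2) _ \<open>\<delta> > 0\<close>
          _ \<open>u \<in> S\<close>])
      (use gap assms(3) in auto)
  then show "u \<in> bilin_kernel a"
    by (rule null_vector_in_kernel(1))
qed

end

section \<open>Local extrema and the critical component\<close>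

lemma quad_cubic_crit_uminus: "quad_cubic_crit (- a) (- b) = quad_cubic_crit a b"
proof -
  have "2 * - x + 3 * - y = 0 \<longleftrightarrow> 2 * x + 3 * y = (0::real)" for x y
    by linarith
  then show ?thesis
    unfolding quad_cubic_crit_def bilin_form_uminus trilin_form_uminus by presburger
qed

lemma bilin_kernel_uminus: "bilin_kernel (- a) = bilin_kernel a"
  by (simp add: bilin_kernel_def bilin_form_uminus)

lemma quad_cubic_local_extremum:
  assumes "sym_bilin a" "sym_trilin b"
    and "(\<forall>\<^sub>F u in nhds 0. 0 \<le> quad_cubic a b u) \<or> (\<forall>\<^sub>F u in nhds 0. quad_cubic a b u \<le> 0)"
  obtains a' b' where "quad_cubic_local_min a' b'"
    "bilin_kernel a' = bilin_kernel a" "quad_cubic_crit a' b' = quad_cubic_crit a b"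
  using assms(3)
proof
  assume "\<forall>\<^sub>F u in nhds 0. 0 \<le> quad_cubic a b u"
  with assms(1,2) have "quad_cubic_local_min a b"
    by unfold_locales
  then show ?thesis
    using that by blast
next
  assume "\<forall>\<^sub>F u in nhds 0. quad_cubic a b u \<le> 0"
  moreover have "quad_cubic (- a) (- b) u = - quad_cubic a b u" for u
    by (simp add: quad_cubic_def bilin_form_uminus trilin_form_uminus)
  moreover have "sym_bilin (- a)" "sym_trilin (- b)"
    using assms(1,2) by (simp_all add: sym_bilin_def sym_trilin_def)
  ultimately have "quad_cubic_local_min (- a) (- b)"
    by unfold_locales simp_all
  then show ?thesis
    using that bilin_kernel_uminus quad_cubic_crit_uminus by blast
qed

lemma local_extremum_recenter:
  assumes "local_extremum f m" "\<And>u. f (m + u) = f m + q u"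
  shows "(\<forall>\<^sub>F u in nhds 0. 0 \<le> q u) \<or> (\<forall>\<^sub>F u in nhds 0. q u \<le> 0)"
proof -
  obtain e where "e > 0" and ext: "(\<forall>v\<in>ball m e. f v \<le> f m) \<or> (\<forall>v\<in>ball m e. f m \<le> f v)"
    using assms(1) unfolding local_extremum_def by blast
  have near: "\<forall>\<^sub>F u in nhds 0. m + u \<in> ball m e"
    using eventually_nhds_ball[OF \<open>e > 0\<close>, of 0] by (rule eventually_mono) (simp add: dist_norm)
  from ext show ?thesis
  proof
    assume max: "\<forall>v\<in>ball m e. f v \<le> f m"
    have "\<forall>\<^sub>F u in nhds 0. f (m + u) \<le> f m"
      by (rule eventually_mono[OF near]) (use max in blast)
    then show ?thesis
      by (simp add: assms(2))
  next
    assume min: "\<forall>v\<in>ball m e. f m \<le> f v"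
    have "\<forall>\<^sub>F u in nhds 0. f m \<le> f (m + u)"
      by (rule eventually_mono[OF near]) (use min in blast)
    then show ?thesis
      by (simp add: assms(2))
  qed
qed

lemma affine_hull_subset_translate:
  fixes m :: "'a::real_vector"
  assumes "(\<lambda>x. x - m) ` C \<subseteq> V" "subspace V"
  shows "affine hull C \<subseteq> (+) m ` V"
proof (rule hull_minimal)
  show "C \<subseteq> (+) m ` V"
  proof
    fix x
    assume "x \<in> C"
    with assms(1) have "x - m \<in> V"
      by blast
    then show "x \<in> (+) m ` V"
      by (rule rev_image_eqI) simp
  qed
  show "affine ((+) m ` V)"
    using affine_translation subspace_imp_affine[OF assms(2)] by blast
qed

theorem lemma4p2:
  fixes p :: "real^3 \<Rightarrow> real" and m :: "real^3" and C :: "(real^3) set"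
  assumes "is_poly3_deg_le3 p"
    and "m \<in> grad_zero_set p"
    and "local_extremum p m"
    and "C = path_component_set (grad_zero_set p) m"
  shows "affine hull C \<subseteq> grad_zero_set p"
proof -
  obtain c g a b where sym: "sym_bilin a" "sym_trilin b" and p: "p = cubic_poly c g a b"
    using assms(1) by (rule is_poly3_deg_le3_symmetric_cubic_poly)
  define H where "H = half_hessian a b m"
  note recenter = cubic_poly_at_critical_point[OF sym assms(2)[unfolded p], folded p H_def]
  have crit_iff: "x \<in> grad_zero_set p \<longleftrightarrow> x - m \<in> quad_cubic_crit H b" for x
    using recenter(2)[of "x - m"] by simp
  obtain a' b' where min: "quad_cubic_local_min a' b'"
    and ker: "bilin_kernel a' = bilin_kernel H" and crit: "quad_cubic_crit a' b' = quad_cubic_crit H b"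
    using sym_bilin_half_hessian[OF sym, of m, folded H_def] sym(2)
      local_extremum_recenter[OF assms(3) recenter(1)] by (rule quad_cubic_local_extremum)
  have "connected ((\<lambda>x. x - m) ` C)" "0 \<in> (\<lambda>x. x - m) ` C"
    "(\<lambda>x. x - m) ` C \<subseteq> quad_cubic_crit a' b'"
    using path_component_subset[of "grad_zero_set p" m] assms(2,4) crit_iff crit
    by (auto simp: path_component_refl intro!: path_connected_continuous_image continuous_intros
        path_connected_imp_connected)
  then have "(\<lambda>x. x - m) ` C \<subseteq> bilin_kernel H"
    unfolding ker[symmetric] by (rule quad_cubic_local_min.connected_crit_subset_kernel[OF min])
  then have "affine hull C \<subseteq> (+) m ` bilin_kernel H"
    by (rule affine_hull_subset_translate[OF _ subspace_bilin_kernel])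
  also have "\<dots> \<subseteq> grad_zero_set p"
    using quad_cubic_local_min.bilin_kernel_subset_crit[OF min] crit_iff ker crit by auto
  finally show ?thesis .
qed

end
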